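(* There exist continuous functions $f_1,f_2,f_3,f_4:\mathrm{SO}(3)\to S^3$ such that for every rotation $R\in\mathrm{SO}(3)$, $\mathbf{R}_Q(f_i(R))=R$ for some $i\in\{1,2,3,4\}$.
   Context: $S^3$ is the set of unit quaternions, identifying $w+x\mathbf{i}+y\mathbf{j}+z\mathbf{k}$ with $(w,x,y,z)$. $\mathbf{R}_Q:S^3\to\mathrm{SO}(3)$ is the standard conversion $$\mathbf{R}_Q(w,x,y,z)=\begin{bmatrix}1-2y^2-2z^2 & 2(xy-zw) & 2(xz+yw)\\ 2(xy+zw) & 1-2x^2-2z^2 & 2(yz-xw)\\ 2(xz-yw) & 2(yz+xw) & 1-2x^2-2y^2\end{bmatrix}.$$ *)

theory Defs
  imports "HOL-Analysis.Analysis"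
begin

definition SO3 :: "(real^3^3) set" where
  "SO3 = {A. orthogonal_matrix A \<and> det A = 1}"

text \<open>S^3: unit quaternions w + x i + y j + z k, identified with (w,x,y,z) in R^4,
  represented as nested real pairs (Euclidean norm).\<close>
definition S3 :: "(real \<times> real \<times> real \<times> real) set" where
  "S3 = {q. norm q = 1}"

definition RQ :: "real \<times> real \<times> real \<times> real \<Rightarrow> real^3^3" where
  "RQ q = (case q of (w, x, y, z) \<Rightarrow>
     vector [vector [1 - 2*y^2 - 2*z^2, 2*(x*y - z*w), 2*(x*z + y*w)],
             vector [2*(x*y + z*w), 1 - 2*x^2 - 2*z^2, 2*(y*z - x*w)],
             vector [2*(x*z - y*w), 2*(y*z + x*w), 1 - 2*x^2 - 2*y^2]])"

end

(* Shepperd's method. For a rotation R = (r_ij) the vector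
   p = (1 + tr R, r32 - r23, r13 - r31, r21 - r12) satisfies |p|^2 = 4 (1 + tr R), and
   RQ (p / |p|) = R as soon as 1 + tr R > 0. Since RQ is multiplicative and RQ e is a diagonal
   sign matrix for each basis quaternion e, the same construction applied to R RQ e and
   multiplied by e on the right recovers R. The four traces tr (R RQ e) sum to 0, so one of
   them is nonnegative. *)

theory Submission
  imports Defs
begin

lemma continuous_on_matrix_mult_right [continuous_intros]:
  fixes M :: "real^'n^'m"
  shows "continuous_on S f \<Longrightarrow> continuous_on S (\<lambda>x. f x ** M)"
  unfolding matrix_matrix_mult_def by (intro continuous_intros)

lemma matrix_3_cases:
  fixes R :: "real^3^3"
  obtains a b c d e f g h k
  where "R = vector [vector [a, b, c], vector [d, e, f], vector [g, h, k]]"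
proof
  show "R = vector [vector [R$1$1, R$1$2, R$1$3], vector [R$2$1, R$2$2, R$2$3],
                    vector [R$3$1, R$3$2, R$3$3]]"
    by (simp add: vec_eq_iff forall_3)
qed

lemma rotation_matrix_entries:
  fixes a b c d e f g h k :: real
  assumes "rotation_matrix (vector [vector [a, b, c], vector [d, e, f], vector [g, h, k]] :: real^3^3)"
  shows "a*a + d*d + g*g = 1" "b*b + e*e + h*h = 1" "c*c + f*f + k*k = 1"
    and "a*b + d*e + g*h = 0" "a*c + d*f + g*k = 0" "b*c + e*f + h*k = 0"
    and "a = e*k - f*h" "d = h*c - b*k" "g = b*f - e*c"
    and "b = f*g - k*d" "e = k*a - c*g" "h = c*d - f*a"
    and "c = d*h - g*e" "f = g*b - a*h" "k = a*e - d*b"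
proof -
  let ?R = "vector [vector [a, b, c], vector [d, e, f], vector [g, h, k]] :: real^3^3"
  have "transpose ?R ** ?R = mat 1"
    using assms unfolding rotation_matrix_def orthogonal_matrix_def by blast
  then show "a*a + d*d + g*g = 1" "b*b + e*e + h*h = 1" "c*c + f*f + k*k = 1"
    and "a*b + d*e + g*h = 0" "a*c + d*f + g*k = 0" "b*c + e*f + h*k = 0"
    by (simp_all add: vec_eq_iff forall_3 matrix_matrix_mult_def sum_3 transpose_def mat_def)
  have "cross3 (?R *v axis i 1) (?R *v axis j 1) = ?R *v cross3 (axis i 1) (axis j 1)" for i j
    using assms by (rule cross_rotation_matrix)
  from this[of 2 3] this[of 3 1] this[of 1 2]
  show "a = e*k - f*h" "d = h*c - b*k" "g = b*f - e*c"
    and "b = f*g - k*d" "e = k*a - c*g" "h = c*d - f*a"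
    and "c = d*h - g*e" "f = g*b - a*h" "k = a*e - d*b"
    by (simp_all add: cross_basis vec_eq_iff forall_3 cross3_simps matrix_vector_mult_def axis_def)
qed

type_synonym quat = "real \<times> real \<times> real \<times> real"

definition quat_mult :: "quat \<Rightarrow> quat \<Rightarrow> quat" where
  "quat_mult p q = (case p of (w, x, y, z) \<Rightarrow> case q of (w', x', y', z') \<Rightarrow>
     (w*w' - x*x' - y*y' - z*z', w*x' + x*w' + y*z' - z*y',
      w*y' - x*z' + y*w' + z*x', w*z' + x*y' - y*x' + z*w'))"

(* The matrix of v \<mapsto> q v q^*: RQ with the constant 1 replaced by |q|^2. *)
definition RQ_homog :: "quat \<Rightarrow> real^3^3" where
  "RQ_homog q = (case q of (w, x, y, z) \<Rightarrow>
     vector [vector [w^2 + x^2 - y^2 - z^2, 2*(x*y - z*w), 2*(x*z + y*w)],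
             vector [2*(x*y + z*w), w^2 - x^2 + y^2 - z^2, 2*(y*z - x*w)],
             vector [2*(x*z - y*w), 2*(y*z + x*w), w^2 - x^2 - y^2 + z^2]])"

lemma norm_quat_sq: "(norm (w, x, y, z :: real))\<^sup>2 = w^2 + x^2 + y^2 + z^2"
  by (simp add: norm_Pair)

lemma norm_quat_mult: "norm (quat_mult p q) = norm p * norm q"
proof -
  obtain w x y z w' x' y' z' where "p = (w, x, y, z)" "q = (w', x', y', z')"
    by (metis prod.exhaust)
  then have "(norm (quat_mult p q))\<^sup>2 = (norm p * norm q)\<^sup>2"
    by (simp add: quat_mult_def norm_quat_sq power_mult_distrib)
      (simp add: power2_eq_square algebra_simps)
  then show ?thesis
    by (simp add: power2_eq_iff_nonneg)
qed

lemma continuous_on_quat_mult [continuous_intros]: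
  "continuous_on S f \<Longrightarrow> continuous_on S g \<Longrightarrow> continuous_on S (\<lambda>s. quat_mult (f s) (g s))"
  unfolding quat_mult_def split_beta by (intro continuous_intros)

lemma RQ_homog_scaleR: "RQ_homog (c *\<^sub>R q) = c\<^sup>2 *\<^sub>R RQ_homog q"
  by (cases q) (simp add: RQ_homog_def vec_eq_iff forall_3 vector_3 power2_eq_square algebra_simps)

lemma RQ_eq_RQ_homog: "norm q = 1 \<Longrightarrow> RQ q = RQ_homog q"
proof (cases q)
  case (fields w x y z)
  assume "norm q = 1"
  then have "w^2 + x^2 + y^2 + z^2 = 1"
    using norm_quat_sq[of w x y z] fields by simp
  then show ?thesis
    unfolding fields RQ_def RQ_homog_def by (simp add: vec_eq_iff forall_3 vector_3 algebra_simps)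
qed

lemma RQ_homog_quat_mult: "RQ_homog (quat_mult p q) = RQ_homog p ** RQ_homog q"
proof -
  obtain w x y z w' x' y' z' where "p = (w, x, y, z)" "q = (w', x', y', z')"
    by (metis prod.exhaust)
  then show ?thesis
    by (simp add: RQ_homog_def quat_mult_def vec_eq_iff forall_3 vector_3 matrix_matrix_mult_def sum_3)
      (simp add: power2_eq_square algebra_simps)
qed

lemma RQ_quat_mult:
  assumes "norm p = 1" "norm q = 1"
  shows "RQ (quat_mult p q) = RQ p ** RQ q"
  using assms by (simp add: RQ_eq_RQ_homog norm_quat_mult RQ_homog_quat_mult)

(* The clamp at 1 keeps the vector away from 0; it is inactive when 0 \<le> trace R. *)
definition quat_of_rotation :: "real^3^3 \<Rightarrow> quat" where
  "quat_of_rotation R =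
     sgn (max 1 (1 + trace R), R$3$2 - R$2$3, R$1$3 - R$3$1, R$2$1 - R$1$2)"

lemma norm_quat_of_rotation: "norm (quat_of_rotation R) = 1"
  by (simp add: quat_of_rotation_def norm_sgn zero_prod_def max_def)

lemma continuous_on_quat_of_rotation: "continuous_on S quat_of_rotation"
  unfolding quat_of_rotation_def trace_def by (intro continuous_intros) (simp add: zero_prod_def max_def)

lemma RQ_quat_of_rotation:
  assumes rot: "rotation_matrix R" and trace: "0 \<le> trace R"
  shows "RQ (quat_of_rotation R) = R"
proof -
  obtain a b c d e f g h k
    where R: "R = vector [vector [a, b, c], vector [d, e, f], vector [g, h, k]]"
    by (rule matrix_3_cases)
  note rel = rotation_matrix_entries[OF rot[unfolded R]]
  define u where "u = 1 + a + e + k"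
  define p where "p = (u, h - f, c - g, d - b)"
  have u: "1 \<le> u"
    using trace by (simp add: R u_def trace_def sum_3)
  have q: "quat_of_rotation R = sgn p"
    using u by (simp add: quat_of_rotation_def R p_def u_def trace_def sum_3 add.assoc)
  have norm_p: "(norm p)\<^sup>2 = 4 * u"
    unfolding p_def norm_quat_sq using rel u_def by algebra
  have homog_p: "RQ_homog p = (4 * u) *\<^sub>R R"
    unfolding R p_def RQ_homog_def
    by (simp add: vec_eq_iff forall_3) (use rel u_def in \<open>intro conjI; algebra\<close>)
  have "p \<noteq> 0"
    using u norm_p by auto
  then have "RQ (sgn p) = RQ_homog ((1 / norm p) *\<^sub>R p)"
    by (simp add: RQ_eq_RQ_homog norm_sgn sgn_div_norm inverse_eq_divide)
  also have "\<dots> = (1 / norm p)\<^sup>2 *\<^sub>R RQ_homog p"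
    by (rule RQ_homog_scaleR)
  also have "\<dots> = R"
    using u by (simp add: homog_p power_one_over norm_p)
  finally show ?thesis
    by (simp add: q)
qed

definition quat_basis :: "quat set" where
  "quat_basis = {(1, 0, 0, 0), (0, 1, 0, 0), (0, 0, 1, 0), (0, 0, 0, 1)}"

lemma RQ_quat_basis:
  assumes "e \<in> quat_basis"
  shows "rotation_matrix (RQ e)" "RQ e ** RQ e = mat 1"
  using assms
  by (auto simp: quat_basis_def RQ_def rotation_matrix_def orthogonal_matrix_def det_3
      matrix_matrix_mult_def transpose_def mat_def vec_eq_iff forall_3 sum_3)

lemma norm_quat_basis: "e \<in> quat_basis \<Longrightarrow> norm e = 1"
  by (auto simp: quat_basis_def norm_Pair)

lemma trace_RQ_quat_basis_cover: "\<exists>e\<in>quat_basis. 0 \<le> trace (R ** RQ e)"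
proof -
  have sum: "(\<Sum>e\<in>quat_basis. trace (R ** RQ e)) = 0"
    by (simp add: quat_basis_def RQ_def trace_def matrix_matrix_mult_def sum_3)
  show ?thesis
  proof (rule ccontr)
    assume "\<not> ?thesis"
    then have "(\<Sum>e\<in>quat_basis. trace (R ** RQ e)) < (\<Sum>e\<in>quat_basis. 0)"
      by (intro sum_strict_mono) (auto simp: quat_basis_def)
    with sum show False
      by simp
  qed
qed

definition quat_branch :: "quat \<Rightarrow> real^3^3 \<Rightarrow> quat" where
  "quat_branch e R = quat_mult (quat_of_rotation (R ** RQ e)) e"

lemma continuous_on_quat_branch: "continuous_on S (quat_branch e)"
  unfolding quat_branch_def
  by (intro continuous_intros continuous_on_compose2[OF continuous_on_quat_of_rotation]) auto

lemma norm_quat_branch: "e \<in> quat_basis \<Longrightarrow> norm (quat_branch e R) = 1"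
  by (simp add: quat_branch_def norm_quat_mult norm_quat_of_rotation norm_quat_basis)

lemma RQ_quat_branch:
  assumes e: "e \<in> quat_basis" and rot: "rotation_matrix R" and trace: "0 \<le> trace (R ** RQ e)"
  shows "RQ (quat_branch e R) = R"
proof -
  have "rotation_matrix (R ** RQ e)"
    using rot RQ_quat_basis(1)[OF e]
    by (simp add: rotation_matrix_def orthogonal_matrix_mul det_mul)
  then have "RQ (quat_of_rotation (R ** RQ e)) = R ** RQ e"
    using trace by (rule RQ_quat_of_rotation)
  then have "RQ (quat_branch e R) = R ** RQ e ** RQ e"
    by (simp add: quat_branch_def RQ_quat_mult norm_quat_of_rotation norm_quat_basis e)
  also have "\<dots> = R"
    by (simp add: matrix_mul_assoc[symmetric] RQ_quat_basis(2)[OF e])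
  finally show ?thesis .
qed

theorem theorem6:
  shows "\<exists>f1 f2 f3 f4 :: real^3^3 \<Rightarrow> real \<times> real \<times> real \<times> real.
    continuous_on SO3 f1 \<and> continuous_on SO3 f2 \<and> continuous_on SO3 f3 \<and> continuous_on SO3 f4 \<and>
    f1 ` SO3 \<subseteq> S3 \<and> f2 ` SO3 \<subseteq> S3 \<and> f3 ` SO3 \<subseteq> S3 \<and> f4 ` SO3 \<subseteq> S3 \<and>
    (\<forall>R\<in>SO3. RQ (f1 R) = R \<or> RQ (f2 R) = R \<or> RQ (f3 R) = R \<or> RQ (f4 R) = R)"
proof (intro exI conjI ballI)
  fix R assume "R \<in> SO3"
  then have "rotation_matrix R"
    by (simp add: SO3_def rotation_matrix_def)
  then have "\<exists>e\<in>quat_basis. RQ (quat_branch e R) = R"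
    using trace_RQ_quat_basis_cover RQ_quat_branch by blast
  then show "RQ (quat_branch (1, 0, 0, 0) R) = R \<or> RQ (quat_branch (0, 1, 0, 0) R) = R \<or>
      RQ (quat_branch (0, 0, 1, 0) R) = R \<or> RQ (quat_branch (0, 0, 0, 1) R) = R"
    by (simp add: quat_basis_def)
qed (auto simp: continuous_on_quat_branch S3_def norm_quat_branch quat_basis_def)

end
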